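(* Let $f\in C^{1,1}_L(\mathbb{R}^n)$, let $\mathcal{Y}=\{y_1,\dots,y_{n+1}\}\subset\mathbb{R}^n$ be affinely independent, let $m$ be the affine function interpolating $f$ on $\mathcal{Y}$, and let $y_0\in\mathbb{R}^n$. Let $G$, $H^\star$ and $\{\mu_{ij}\}_{i\in\mathcal{I}_+,j\in\mathcal{I}_-}$ be as in the context. If $\mu_{ij}\ge0$ for all $(i,j)\in\mathcal{I}_+\times\mathcal{I}_-$, then $$|m(y_0)-f(y_0)|\le\tfrac12\langle G,H^\star\rangle .$$
   Context: Let $n\ge1$, $L>0$. $C^{1,1}_L(\mathbb{R}^n)$ denotes the set of differentiable $f:\mathbb{R}^n\to\mathbb{R}$ with $\|\nabla f(u_1)-\nabla f(u_2)\|\le L\|u_1-u_2\|$ for all $u_1,u_2$. $m$ is the unique affine function with $m(y_i)=f(y_i)$, $i=1,\dots,n+1$. The barycentric coordinates of $y_0$ w.r.t. $\mathcal{Y}$ are the unique reals $\ell_1,\dots,\ell_{n+1}$ with $\sum_{i=1}^{n+1}\ell_i=1$, $\sum_{i=1}^{n+1}\ell_iy_i=y_0$; set $\ell_0=-1$. The points are ordered so that $\ell_1\ge\cdots\ge\ell_{n+1}$. Let $\mathcal{I}_+=\{i\in\{0,\dots,n+1\}:\ell_i>0\}=\{1,\dots,|\mathcal{I}_+|\}$, $\mathcal{I}_-=\{i\in\{0,\dots,n+1\}:\ell_i<0\}=\{0\}\cup\{n+3-|\mathcal{I}_-|,\dots,n+1\}$. Let $G=\sum_{i=0}^{n+1}\ell_iy_iy_i^T$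 with eigendecomposition $G=P\Lambda P^T$ ($P$ orthogonal, $\Lambda$ diagonal); let $P_+$ (resp. $P_-$) be the matrix of columns of $P$ belonging to positive (resp. negative) eigenvalues ($G$ has $|\mathcal{I}_+|-1$ positive and $|\mathcal{I}_-|-1$ negative eigenvalues), and $H^\star=L\,P\,\mathrm{sign}(\Lambda)P^T=L(P_+P_+^T-P_-P_-^T)$ (entrywise sign, $\mathrm{sign}(0)=0$). Let $Y\in\mathbb{R}^{(n+1)\times n}$ have $i$th row $(y_i-y_0)^T$; $Y_+$ consists of its first $|\mathcal{I}_+|$ rows, $Y_-$ of its last $|\mathcal{I}_-|-1$ rows; $\ell_+=(\ell_1,\dots,\ell_{|\mathcal{I}_+|})^T$. $Y_-P_-$ is invertible; set $M=\operatorname{diag}(\ell_+)Y_+P_-(Y_-P_-)^{-1}$, $\mu_{ij}=[M]_{i,(j-n-2+|\mathcal{I}_-|)}$ for $(i,j)\in\mathcal{I}_+\times(\mathcal{I}_-\setminus\{0\})$, and $\mu_{i0}=\ell_i-\sum_{j\in\mathcal{I}_-\setminus\{0\}}\mu_{ij}$ for $i\in\mathcal{I}_+$. For matrices, $\langle A,B\rangle=\sum_{i,j}A_{ij}B_{ij}$. *)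

theory Defs
  imports "HOL-Analysis.Analysis"
begin

definition C11 :: "real \<Rightarrow> (real^'n \<Rightarrow> real) \<Rightarrow> bool" where
  "C11 L f \<longleftrightarrow> (\<exists>g :: real^'n \<Rightarrow> real^'n.
      (\<forall>x. (f has_derivative (\<lambda>h. g x \<bullet> h)) (at x)) \<and>
      (\<forall>u1 u2. norm (g u1 - g u2) \<le> L * norm (u1 - u2)))"

definition outer :: "real^'n \<Rightarrow> real^'n \<Rightarrow> real^'n^'n" where
  "outer u v = (\<chi> a b. u$a * v$b)"

definition frob_inner :: "real^'n^'n \<Rightarrow> real^'n^'n \<Rightarrow> real" where
  "frob_inner A B = (\<Sum>a\<in>UNIV. \<Sum>b\<in>UNIV. A$a$b * B$a$b)"

definition mat_sign :: "real^'n^'n \<Rightarrow> real^'n^'n" where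
  "mat_sign A = (\<chi> a b. sgn (A$a$b))"

definition mat_inv_nat :: "nat \<Rightarrow> (nat \<Rightarrow> nat \<Rightarrow> real) \<Rightarrow> (nat \<Rightarrow> nat \<Rightarrow> real)" where
  "mat_inv_nat q A = (THE B.
      (\<forall>a<q. \<forall>b<q. (\<Sum>c<q. A a c * B c b) = (if a = b then 1 else 0)
                 \<and> (\<Sum>c<q. B a c * A c b) = (if a = b then 1 else 0))
    \<and> (\<forall>a b. q \<le> a \<or> q \<le> b \<longrightarrow> B a b = 0))"

text \<open>The matrix M = diag(l_+) Y_+ P_- (Y_- P_-)^{-1}, 0-based indices.
  N = dimension, p = |I_+|, q = |I_-| - 1; the columns of P_- are the columns
  column (ks!b) P, b < q.  Row a of Y_+ is y(a+1) - y 0; row a of Y_- is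
  y(N+2-q+a) - y 0.\<close>
definition M_mat :: "nat \<Rightarrow> nat \<Rightarrow> nat \<Rightarrow> (nat \<Rightarrow> real) \<Rightarrow> (nat \<Rightarrow> real^'n)
    \<Rightarrow> real^'n^'n \<Rightarrow> 'n list \<Rightarrow> nat \<Rightarrow> nat \<Rightarrow> real" where
  "M_mat N p q l y P ks =
     (let YpPm = (\<lambda>a b. (y (a + 1) - y 0) \<bullet> column (ks ! b) P);
          YmPm = (\<lambda>a b. (y (N + 2 - q + a) - y 0) \<bullet> column (ks ! b) P);
          Inv = mat_inv_nat q YmPm
      in (\<lambda>a c. l (a + 1) * (\<Sum>b<q. YpPm a b * Inv b c)))"

definition mu :: "nat \<Rightarrow> nat \<Rightarrow> nat \<Rightarrow> (nat \<Rightarrow> real) \<Rightarrow> (nat \<Rightarrow> real^'n)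
    \<Rightarrow> real^'n^'n \<Rightarrow> 'n list \<Rightarrow> nat \<Rightarrow> nat \<Rightarrow> real" where
  "mu N p q l y P ks i j =
     (if j = 0 then l i - (\<Sum>j'\<in>{N + 2 - q..N + 1}. M_mat N p q l y P ks (i - 1) (j' - (N + 2 - q)))
      else M_mat N p q l y P ks (i - 1) (j - (N + 2 - q)))"

end

theory Submission
  imports Defs
begin

text \<open>Since \<open>m\<close> is affine and interpolates \<open>f\<close>, \<open>m(y\<^sub>0) - f(y\<^sub>0) = \<Sum>\<^sub>k \<ell>\<^sub>k f(y\<^sub>k)\<close>
  (with \<open>\<ell>\<^sub>0 = -1\<close>). The numbers \<open>\<mu>\<^sub>i\<^sub>j \<ge> 0\<close> form a coupling of \<open>\<I>\<^sub>+\<close> and \<open>\<I>\<^sub>-\<close> with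
  marginals \<open>\<ell>\<^sub>i\<close> and \<open>-\<ell>\<^sub>j\<close>, and, writing \<open>B = P\<^sub>-P\<^sub>-\<^sup>T\<close> for the projection onto the
  negative eigenspace of \<open>G\<close>, each \<open>B y\<^sub>i\<close> is the \<open>\<mu>\<close>-mean of the \<open>B y\<^sub>j\<close> and each
  \<open>(I - B) y\<^sub>j\<close> is the \<open>\<mu>\<close>-mean of the \<open>(I - B) y\<^sub>i\<close>. Comparing \<open>f(y\<^sub>i)\<close> with \<open>f(y\<^sub>j)\<close>
  through the point \<open>y\<^sub>i + B y\<^sub>j - B y\<^sub>i\<close> by the descent lemma and averaging over \<open>\<mu>\<close>, the
  first-order terms cancel and the quadratic ones add up to
  \<open>L/2 \<Sum>\<^sub>k \<ell>\<^sub>k (\<parallel>(I - B) y\<^sub>k\<parallel>\<^sup>2 - \<parallel>B y\<^sub>k\<parallel>\<^sup>2) \<le> L/2 \<Sum> |\<lambda>\<^sub>k| = \<langle>G, H\<^sup>\<star>\<rangle>/2\<close>.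
  The same bound for \<open>-f\<close> gives the absolute value.\<close>

lemma descent_lemma_upper:
  fixes f :: "'a::real_inner \<Rightarrow> real" and g :: "'a \<Rightarrow> 'a"
  assumes der: "\<And>x. (f has_derivative (\<lambda>h. g x \<bullet> h)) (at x)"
    and lip: "\<And>u v. norm (g u - g v) \<le> L * norm (u - v)"
  shows "f w - f x - g x \<bullet> (w - x) \<le> L / 2 * norm (w - x)^2"
proof -
  define d where "d = w - x"
  define \<phi> where "\<phi> t = f (x + t *\<^sub>R d) - t * (g x \<bullet> d) - L / 2 * t^2 * norm d ^ 2" for t
  have \<phi>_deriv: "(\<phi> has_real_derivative (g (x + t *\<^sub>R d) - g x) \<bullet> d - L * t * norm d ^ 2) (at t)"
    for t
  proof -
    have "((\<lambda>t. x + t *\<^sub>R d) has_derivative (\<lambda>s. s *\<^sub>R d)) (at t)"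
      by (auto intro!: derivative_eq_intros)
    from diff_chain_at[OF this der]
    have "((\<lambda>t. f (x + t *\<^sub>R d)) has_derivative (\<lambda>s. g (x + t *\<^sub>R d) \<bullet> (s *\<^sub>R d))) (at t)"
      by (simp add: o_def)
    then show ?thesis
      unfolding \<phi>_def has_field_derivative_def
      by (auto intro!: derivative_eq_intros simp: algebra_simps inner_diff_left)
  qed
  have \<phi>_deriv_nonpos: "(g (x + t *\<^sub>R d) - g x) \<bullet> d - L * t * norm d ^ 2 \<le> 0" if "0 \<le> t" for t
  proof -
    have "(g (x + t *\<^sub>R d) - g x) \<bullet> d \<le> norm (g (x + t *\<^sub>R d) - g x) * norm d"
      by (rule norm_cauchy_schwarz)
    also have "\<dots> \<le> L * norm (t *\<^sub>R d) * norm d"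
      using lip[of "x + t *\<^sub>R d" x] by (simp add: mult_right_mono)
    also have "\<dots> = L * t * norm d ^ 2"
      using that by (simp add: power2_eq_square)
    finally show ?thesis by simp
  qed
  have "\<phi> 1 \<le> \<phi> 0"
  proof (rule DERIV_nonpos_imp_nonincreasing[of 0 1])
    fix t :: real assume "0 \<le> t" "t \<le> 1"
    then show "\<exists>D. (\<phi> has_real_derivative D) (at t) \<and> D \<le> 0"
      using \<phi>_deriv \<phi>_deriv_nonpos by blast
  qed simp
  then show ?thesis by (simp add: \<phi>_def d_def)
qed

lemma descent_lemma:
  fixes f :: "'a::real_inner \<Rightarrow> real" and g :: "'a \<Rightarrow> 'a"
  assumes der: "\<And>x. (f has_derivative (\<lambda>h. g x \<bullet> h)) (at x)"
    and lip: "\<And>u v. norm (g u - g v) \<le> L * norm (u - v)"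
  shows "\<bar>f w - f x - g x \<bullet> (w - x)\<bar> \<le> L / 2 * norm (w - x)^2"
proof -
  have "- f w - - f x - (- g x) \<bullet> (w - x) \<le> L / 2 * norm (w - x)^2"
  proof (rule descent_lemma_upper)
    show "((\<lambda>x. - f x) has_derivative (\<lambda>h. - g x \<bullet> h)) (at x)" for x
      using has_derivative_minus[OF der[of x]] by simp
    show "norm (- g u - - g v) \<le> L * norm (u - v)" for u v
      using lip[of u v] by (simp add: norm_minus_commute)
  qed
  then show ?thesis
    using descent_lemma_upper[OF der lip, of w x] unfolding abs_le_iff inner_minus_left by linarith
qed

lemma coupling_inner_diff_sum:
  fixes v w :: "'i \<Rightarrow> 'a::real_inner"
  assumes mean: "\<And>i. i \<in> I \<Longrightarrow> (\<Sum>j\<in>J. \<mu> i j *\<^sub>R v j) = (\<Sum>j\<in>J. \<mu> i j) *\<^sub>R v i"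
  shows "(\<Sum>i\<in>I. \<Sum>j\<in>J. \<mu> i j * (w i \<bullet> (v j - v i))) = 0"
proof (rule sum.neutral, rule ballI)
  fix i assume i: "i \<in> I"
  have "(\<Sum>j\<in>J. \<mu> i j * (w i \<bullet> (v j - v i)))
      = w i \<bullet> ((\<Sum>j\<in>J. \<mu> i j *\<^sub>R v j) - (\<Sum>j\<in>J. \<mu> i j) *\<^sub>R v i)"
    by (simp add: inner_sum_right inner_diff_right sum_subtractf sum_distrib_right algebra_simps)
  then show "(\<Sum>j\<in>J. \<mu> i j * (w i \<bullet> (v j - v i))) = 0"
    using mean[OF i] by simp
qed

lemma coupling_sq_dist_sum:
  fixes v :: "'i \<Rightarrow> 'a::real_inner"
  assumes mean: "\<And>i. i \<in> I \<Longrightarrow> (\<Sum>j\<in>J. \<mu> i j *\<^sub>R v j) = (\<Sum>j\<in>J. \<mu> i j) *\<^sub>R v i"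
  shows "(\<Sum>i\<in>I. \<Sum>j\<in>J. \<mu> i j * norm (v j - v i)^2)
       = (\<Sum>i\<in>I. \<Sum>j\<in>J. \<mu> i j * (norm (v j)^2 - norm (v i)^2))"
proof (rule sum.cong[OF refl])
  fix i assume i: "i \<in> I"
  have "\<mu> i j * norm (v j - v i)^2
      = \<mu> i j * (norm (v j)^2 - norm (v i)^2) - 2 * (\<mu> i j * ((v j - v i) \<bullet> v i))" for j
    by (simp add: power2_norm_eq_inner inner_diff_left inner_diff_right inner_commute algebra_simps)
  then have "(\<Sum>j\<in>J. \<mu> i j * norm (v j - v i)^2)
      = (\<Sum>j\<in>J. \<mu> i j * (norm (v j)^2 - norm (v i)^2)) - 2 * (\<Sum>j\<in>J. \<mu> i j * (v i \<bullet> (v j - v i)))"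
    by (simp add: sum_subtractf sum_distrib_left inner_commute)
  also have "(\<Sum>j\<in>J. \<mu> i j * (v i \<bullet> (v j - v i))) = 0"
    using coupling_inner_diff_sum[where I="{i}" and J=J and \<mu>=\<mu> and v=v and w=v] mean[OF i] by simp
  finally show "(\<Sum>j\<in>J. \<mu> i j * norm (v j - v i)^2)
      = (\<Sum>j\<in>J. \<mu> i j * (norm (v j)^2 - norm (v i)^2))" by simp
qed

text \<open>The two points are compared through \<open>x i + B (x j) - B (x i)\<close>, which differs from
  \<open>x i\<close> by a \<open>B\<close>-increment and from \<open>x j\<close> by an increment of \<open>id - B\<close>.\<close>
lemma descent_bound_via_intermediate_point:
  fixes f :: "'a::real_inner \<Rightarrow> real" and g B :: "'a \<Rightarrow> 'a"
  assumes der: "\<And>x. (f has_derivative (\<lambda>h. g x \<bullet> h)) (at x)"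
    and lip: "\<And>u v. norm (g u - g v) \<le> L * norm (u - v)"
  defines "Q \<equiv> \<lambda>x. x - B x"
  shows "f x - f z \<le> - (g x \<bullet> (B z - B x)) + L / 2 * norm (B z - B x)^2
                      + g z \<bullet> (Q x - Q z) + L / 2 * norm (Q x - Q z)^2"
proof -
  define w where "w = x + B z - B x"
  have wx: "w - x = B z - B x" and wz: "w - z = Q x - Q z"
    by (simp_all add: w_def Q_def algebra_simps)
  from descent_lemma[OF der lip, of w x] descent_lemma[OF der lip, of w z]
  show ?thesis
    unfolding wx wz abs_le_iff by linarith
qed

lemma coupling_descent_bound:
  fixes f :: "'a::real_inner \<Rightarrow> real" and g B :: "'a \<Rightarrow> 'a" and x :: "'i \<Rightarrow> 'a"
  assumes der: "\<And>x. (f has_derivative (\<lambda>h. g x \<bullet> h)) (at x)"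
    and lip: "\<And>u v. norm (g u - g v) \<le> L * norm (u - v)"
    and nonneg: "\<And>i j. i \<in> I \<Longrightarrow> j \<in> J \<Longrightarrow> 0 \<le> \<mu> i j"
    and row_mean: "\<And>i. i \<in> I \<Longrightarrow> (\<Sum>j\<in>J. \<mu> i j *\<^sub>R B (x j)) = (\<Sum>j\<in>J. \<mu> i j) *\<^sub>R B (x i)"
    and col_mean: "\<And>j. j \<in> J \<Longrightarrow>
      (\<Sum>i\<in>I. \<mu> i j *\<^sub>R (x i - B (x i))) = (\<Sum>i\<in>I. \<mu> i j) *\<^sub>R (x j - B (x j))"
  defines "\<psi> \<equiv> \<lambda>v. norm (v - B v)^2 - norm (B v)^2"
  shows "(\<Sum>i\<in>I. \<Sum>j\<in>J. \<mu> i j * (f (x i) - f (x j)))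
       \<le> L / 2 * (\<Sum>i\<in>I. \<Sum>j\<in>J. \<mu> i j * (\<psi> (x i) - \<psi> (x j)))"
proof -
  define b where "b k = B (x k)" for k
  define c where "c k = x k - B (x k)" for k
  have "(\<Sum>i\<in>I. \<Sum>j\<in>J. \<mu> i j * (f (x i) - f (x j)))
      \<le> (\<Sum>i\<in>I. \<Sum>j\<in>J. \<mu> i j * (- (g (x i) \<bullet> (b j - b i)) + L / 2 * norm (b j - b i)^2
                                  + g (x j) \<bullet> (c i - c j) + L / 2 * norm (c i - c j)^2))"
    using descent_bound_via_intermediate_point[OF der lip]
    by (intro sum_mono mult_left_mono nonneg) (simp_all add: b_def c_def)
  also have "\<dots> = (\<Sum>i\<in>I. \<Sum>j\<in>J. - (\<mu> i j * (g (x i) \<bullet> (b j - b i)))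
      + L / 2 * (\<mu> i j * norm (b j - b i)^2) + \<mu> i j * (g (x j) \<bullet> (c i - c j))
      + L / 2 * (\<mu> i j * norm (c i - c j)^2))"
    by (intro sum.cong refl) (simp add: algebra_simps)
  also have "\<dots> = - (\<Sum>i\<in>I. \<Sum>j\<in>J. \<mu> i j * (g (x i) \<bullet> (b j - b i)))
      + L / 2 * (\<Sum>i\<in>I. \<Sum>j\<in>J. \<mu> i j * norm (b j - b i)^2)
      + (\<Sum>i\<in>I. \<Sum>j\<in>J. \<mu> i j * (g (x j) \<bullet> (c i - c j)))
      + L / 2 * (\<Sum>i\<in>I. \<Sum>j\<in>J. \<mu> i j * norm (c i - c j)^2)"
    by (simp only: sum.distrib sum_negf sum_distrib_left)
  also have "(\<Sum>i\<in>I. \<Sum>j\<in>J. \<mu> i j * (g (x i) \<bullet> (b j - b i))) = 0"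
    by (rule coupling_inner_diff_sum) (simp add: row_mean b_def)
  also have "(\<Sum>i\<in>I. \<Sum>j\<in>J. \<mu> i j * (g (x j) \<bullet> (c i - c j))) = 0"
    by (subst sum.swap, rule coupling_inner_diff_sum) (simp add: col_mean c_def)
  also have "(\<Sum>i\<in>I. \<Sum>j\<in>J. \<mu> i j * norm (b j - b i)^2)
      = (\<Sum>i\<in>I. \<Sum>j\<in>J. \<mu> i j * (norm (b j)^2 - norm (b i)^2))"
    by (rule coupling_sq_dist_sum) (simp add: row_mean b_def)
  also have "(\<Sum>i\<in>I. \<Sum>j\<in>J. \<mu> i j * norm (c i - c j)^2)
      = (\<Sum>i\<in>I. \<Sum>j\<in>J. \<mu> i j * (norm (c i)^2 - norm (c j)^2))"
    using coupling_sq_dist_sum[where I=J and J=I and \<mu>="\<lambda>j i. \<mu> i j" and v=c]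
    by (simp add: col_mean c_def sum.swap[of _ J I])
  finally show ?thesis
    by (simp add: \<psi>_def b_def c_def sum_subtractf sum.distrib algebra_simps)
qed

lemma orthogonal_matrix_column_inner:
  fixes P :: "real^'n^'n"
  assumes "orthogonal_matrix P"
  shows "column i P \<bullet> column j P = (if i = j then 1 else 0)"
  using assms unfolding orthogonal_matrix_orthonormal_columns
  by (auto simp: orthogonal_def norm_eq_1)

lemma vector_matrix_mult_nth:
  fixes P :: "real^'n^'n"
  shows "(v v* P) $ k = column k P \<bullet> v"
  by (simp add: vector_matrix_mult_def column_def inner_vec_def mult.commute)

lemma orthogonal_matrix_column_expansion:
  fixes P :: "real^'n^'n"
  assumes "orthogonal_matrix P"
  shows "(\<Sum>k\<in>UNIV. (column k P \<bullet> v) *\<^sub>R column k P) = v"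
proof -
  have "P ** transpose P = mat 1"
    using assms by (simp add: orthogonal_matrix_def)
  then have "v = P *v (transpose P *v v)"
    by (simp only: matrix_vector_mul_assoc matrix_vector_mul_lid)
  also have "\<dots> = (\<Sum>k\<in>UNIV. (column k P \<bullet> v) *\<^sub>R column k P)"
    by (simp only: transpose_matrix_vector matrix_mult_sum[of P "v v* P"] vector_matrix_mult_nth
        scalar_mult_eq_scaleR)
  finally show ?thesis by (rule sym)
qed

lemma norm_sum_orthogonal_columns:
  fixes P :: "real^'n^'n"
  assumes "orthogonal_matrix P"
  shows "norm (\<Sum>k\<in>S. c k *\<^sub>R column k P)^2 = (\<Sum>k\<in>S. c k ^ 2)"
proof -
  have "norm (\<Sum>k\<in>S. c k *\<^sub>R column k P)^2 = (\<Sum>k\<in>S. \<Sum>j\<in>S. c k * (c j * (column j P \<bullet> column k P)))"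
    by (simp add: power2_norm_eq_inner inner_sum_left inner_sum_right sum_distrib_left mult.assoc)
  also have "\<dots> = (\<Sum>k\<in>S. c k ^ 2)"
    by (simp add: orthogonal_matrix_column_inner[OF assms] if_distrib[of "\<lambda>t. _ * t"] power2_eq_square
        cong: if_cong)
  finally show ?thesis .
qed

lemma diagonal_mult_vec:
  fixes D :: "real^'n^'n"
  assumes "\<And>a b. a \<noteq> b \<Longrightarrow> D $ a $ b = 0"
  shows "(D *v v) $ k = D $ k $ k * v $ k"
proof -
  have "(\<Sum>j\<in>UNIV. D $ k $ j * v $ j) = (\<Sum>j\<in>UNIV. if j = k then D $ k $ k * v $ k else 0)"
    using assms by (intro sum.cong) auto
  then show ?thesis by (simp add: matrix_vector_mult_def)
qed

lemma inner_diagonal_conj: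
  fixes P D :: "real^'n^'n"
  assumes "\<And>a b. a \<noteq> b \<Longrightarrow> D $ a $ b = 0"
  shows "u \<bullet> ((P ** D ** transpose P) *v v)
       = (\<Sum>k\<in>UNIV. D $ k $ k * (column k P \<bullet> u) * (column k P \<bullet> v))"
proof -
  have "u \<bullet> ((P ** D ** transpose P) *v v) = (transpose P *v u) \<bullet> (D *v (transpose P *v v))"
    by (simp add: matrix_vector_mul_assoc[symmetric] dot_lmul_matrix[symmetric]
        vector_transpose_matrix)
  then show ?thesis
    by (simp add: inner_vec_def diagonal_mult_vec[OF assms] vector_matrix_mult_nth algebra_simps)
qed

lemma frob_inner_diagonal_conj:
  fixes A P D :: "real^'n^'n"
  assumes "\<And>a b. a \<noteq> b \<Longrightarrow> D $ a $ b = 0"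
  shows "frob_inner A (P ** D ** transpose P)
       = (\<Sum>k\<in>UNIV. D $ k $ k * (column k P \<bullet> (A *v column k P)))"
proof -
  have entry: "(P ** D ** transpose P) $ a $ b = (\<Sum>k\<in>UNIV. D $ k $ k * P $ a $ k * P $ b $ k)"
    for a b
    using inner_diagonal_conj[OF assms, of "axis a 1" P "axis b 1"]
    by (simp add: inner_axis' inner_axis matrix_vector_mult_basis column_def)
  have "frob_inner A (P ** D ** transpose P)
      = (\<Sum>a\<in>UNIV. \<Sum>b\<in>UNIV. \<Sum>k\<in>UNIV. D $ k $ k * (P $ a $ k * (A $ a $ b * P $ b $ k)))"
    by (simp add: frob_inner_def entry sum_distrib_left algebra_simps)
  also have "\<dots> = (\<Sum>a\<in>UNIV. \<Sum>k\<in>UNIV. \<Sum>b\<in>UNIV. D $ k $ k * (P $ a $ k * (A $ a $ b * P $ b $ k)))"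
    by (rule sum.cong[OF refl], rule sum.swap)
  also have "\<dots> = (\<Sum>k\<in>UNIV. \<Sum>a\<in>UNIV. \<Sum>b\<in>UNIV. D $ k $ k * (P $ a $ k * (A $ a $ b * P $ b $ k)))"
    by (rule sum.swap)
  also have "\<dots> = (\<Sum>k\<in>UNIV. D $ k $ k * (column k P \<bullet> (A *v column k P)))"
    by (simp add: inner_vec_def matrix_vector_mult_def column_def sum_distrib_left)
  finally show ?thesis .
qed

lemma upward_closed_eq_atLeastAtMost:
  fixes S :: "nat set"
  assumes sub: "S \<subseteq> {a..b}" and up: "\<And>x z. x \<in> S \<Longrightarrow> x \<le> z \<Longrightarrow> z \<le> b \<Longrightarrow> z \<in> S"
  shows "S = {Suc b - card S..b}"
proof (cases "S = {}")
  case False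
  have "finite S" using sub finite_subset by blast
  define m where "m = Min S"
  have "m \<in> S" using False \<open>finite S\<close> by (simp add: m_def)
  have "S = {m..b}"
  proof
    show "S \<subseteq> {m..b}" using sub \<open>finite S\<close> by (auto simp: m_def)
    show "{m..b} \<subseteq> S" using up \<open>m \<in> S\<close> by auto
  qed
  moreover have "m \<le> b" using \<open>m \<in> S\<close> sub by auto
  ultimately show ?thesis by simp
qed simp

lemma sum_UNIV_reindex_support:
  fixes h :: "'n::finite \<Rightarrow> 'b::comm_monoid_add"
  assumes "inj_on e A" and "\<And>z. z \<notin> e ` A \<Longrightarrow> h z = 0"
  shows "(\<Sum>z\<in>UNIV. h z) = (\<Sum>a\<in>A. h (e a))"
proof -
  have "(\<Sum>z\<in>UNIV. h z) = (\<Sum>z\<in>e ` A. h z)"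
    using assms(2) by (intro sum.mono_neutral_right) auto
  also have "\<dots> = (\<Sum>a\<in>A. h (e a))"
    by (rule sum.reindex[OF assms(1), unfolded o_def])
  finally show ?thesis .
qed

lemma nat_matrix_inverse_unique:
  fixes A B B' :: "nat \<Rightarrow> nat \<Rightarrow> real"
  assumes right: "\<And>a b. a < q \<Longrightarrow> b < q \<Longrightarrow> (\<Sum>c<q. A a c * B c b) = (if a = b then 1 else 0)"
    and left': "\<And>a b. a < q \<Longrightarrow> b < q \<Longrightarrow> (\<Sum>c<q. B' a c * A c b) = (if a = b then 1 else 0)"
    and outside: "\<And>a b. q \<le> a \<or> q \<le> b \<Longrightarrow> B a b = 0"
    and outside': "\<And>a b. q \<le> a \<or> q \<le> b \<Longrightarrow> B' a b = 0"
  shows "B' = B"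
proof (intro ext)
  fix a b
  show "B' a b = B a b"
  proof (cases "a < q \<and> b < q")
    case True
    have "B' a b = (\<Sum>d<q. B' a d * (\<Sum>c<q. A d c * B c b))"
      using True by (simp add: right if_distrib[of "\<lambda>t. _ * t"] cong: if_cong)
    also have "\<dots> = (\<Sum>d<q. \<Sum>c<q. B' a d * A d c * B c b)"
      by (simp add: sum_distrib_left mult.assoc)
    also have "\<dots> = (\<Sum>c<q. \<Sum>d<q. B' a d * A d c * B c b)"
      by (rule sum.swap)
    also have "\<dots> = (\<Sum>c<q. (\<Sum>d<q. B' a d * A d c) * B c b)"
      by (simp add: sum_distrib_right)
    also have "\<dots> = (\<Sum>c<q. if a = c then B c b else 0)"
      using True by (intro sum.cong) (simp_all add: left')
    also have "\<dots> = B a b"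
      using True by simp
    finally show ?thesis .
  next
    case False
    then have "q \<le> a \<or> q \<le> b" by auto
    then show ?thesis using outside[of a b] outside'[of a b] by simp
  qed
qed

text \<open>Completing a \<open>q \<times> q\<close> matrix by the identity gives a square matrix over the finite type
  \<open>'n\<close>, for which a trivial kernel already implies invertibility.\<close>
definition embed_nat_matrix :: "(nat \<Rightarrow> 'n::finite) \<Rightarrow> nat \<Rightarrow> (nat \<Rightarrow> nat \<Rightarrow> real) \<Rightarrow> real^'n^'n"
  where "embed_nat_matrix e q A = (\<chi> x z. if x \<in> e ` {..<q} \<and> z \<in> e ` {..<q}
           then A (the_inv_into {..<q} e x) (the_inv_into {..<q} e z) else if x = z then 1 else 0)"

lemma embed_nat_matrix_entries:
  assumes "inj_on e {..<q}" and "a < q"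
  shows "b < q \<Longrightarrow> embed_nat_matrix e q A $ e a $ e b = A a b"
    and "z \<notin> e ` {..<q} \<Longrightarrow> embed_nat_matrix e q A $ e a $ z = 0"
    and "z \<notin> e ` {..<q} \<Longrightarrow> embed_nat_matrix e q A $ z $ e a = 0"
  using assms by (auto simp: embed_nat_matrix_def the_inv_into_f_f)

lemma embed_nat_matrix_ker:
  fixes e :: "nat \<Rightarrow> 'n::finite"
  assumes e_inj: "inj_on e {..<q}"
    and ker: "\<And>c b. (\<And>a. a < q \<Longrightarrow> (\<Sum>b<q. A a b * c b) = 0) \<Longrightarrow> b < q \<Longrightarrow> c b = 0"
    and v: "embed_nat_matrix e q A *v v = 0"
  shows "v = 0"
proof -
  have outside: "v $ x = 0" if "x \<notin> e ` {..<q}" for x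
  proof -
    have "(embed_nat_matrix e q A *v v) $ x = v $ x"
      using that by (simp add: matrix_vector_mult_def embed_nat_matrix_def if_distrib[of "\<lambda>t. t * _"]
          cong: if_cong)
    with v show ?thesis by simp
  qed
  have inside: "v $ e b = 0" if "b < q" for b
  proof (rule ker[OF _ that])
    fix a assume "a < q"
    have "0 = (embed_nat_matrix e q A *v v) $ e a" using v by simp
    also have "\<dots> = (\<Sum>b<q. A a b * v $ e b)"
      unfolding matrix_vector_mult_def using \<open>a < q\<close>
      by (simp add: sum_UNIV_reindex_support[OF e_inj] embed_nat_matrix_entries[OF e_inj])
    finally show "(\<Sum>b<q. A a b * v $ e b) = 0" by simp
  qed
  show "v = 0"
  proof (rule iffD2[OF vec_eq_iff], rule allI)
    fix x
    show "v $ x = 0 $ x"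
      using outside inside by (cases "x \<in> e ` {..<q}") auto
  qed
qed

lemma nat_matrix_inverse_exists:
  fixes A :: "nat \<Rightarrow> nat \<Rightarrow> real"
  assumes q_le: "q \<le> CARD('n::finite)"
    and ker: "\<And>c b. (\<And>a. a < q \<Longrightarrow> (\<Sum>b<q. A a b * c b) = 0) \<Longrightarrow> b < q \<Longrightarrow> c b = 0"
  shows "\<exists>B. (\<forall>a<q. \<forall>b<q. (\<Sum>c<q. A a c * B c b) = (if a = b then 1 else 0)
                     \<and> (\<Sum>c<q. B a c * A c b) = (if a = b then 1 else 0))
           \<and> (\<forall>a b. q \<le> a \<or> q \<le> b \<longrightarrow> B a b = 0)"
proof -
  obtain e :: "nat \<Rightarrow> 'n" where e_inj: "inj_on e {..<q}"
    using card_le_inj[of "{..<q}" "UNIV :: 'n set"] q_le by auto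
  define A' where "A' = embed_nat_matrix e q A"
  have "v = 0" if "A' *v v = 0" for v
    by (rule embed_nat_matrix_ker[where A=A, OF e_inj]) (fact ker, fact that[unfolded A'_def])
  then obtain B' where "B' ** A' = mat 1"
    using matrix_left_invertible_ker by blast
  then have "A' ** B' = mat 1"
    using matrix_left_right_inverse by blast
  define B where "B a b = (if a < q \<and> b < q then B' $ e a $ e b else 0)" for a b
  have "(\<Sum>c<q. A a c * B c b) = (if a = b then 1 else 0)"
    and "(\<Sum>c<q. B a c * A c b) = (if a = b then 1 else 0)" if "a < q" "b < q" for a b
  proof -
    have "(A' ** B') $ e a $ e b = (\<Sum>c<q. A a c * B c b)"
      and "(B' ** A') $ e a $ e b = (\<Sum>c<q. B a c * A c b)"
      unfolding matrix_matrix_mult_def A'_def using that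
      by (simp_all add: sum_UNIV_reindex_support[OF e_inj] embed_nat_matrix_entries[OF e_inj] B_def)
    moreover have "e a = e b \<longleftrightarrow> a = b"
      using that e_inj by (auto dest: inj_onD)
    ultimately show "(\<Sum>c<q. A a c * B c b) = (if a = b then 1 else 0)"
      and "(\<Sum>c<q. B a c * A c b) = (if a = b then 1 else 0)"
      using \<open>A' ** B' = mat 1\<close> \<open>B' ** A' = mat 1\<close> by (simp_all add: mat_def)
  qed
  then show ?thesis
    by (intro exI[of _ B]) (auto simp: B_def)
qed

lemma mat_inv_nat_inverse:
  fixes A :: "nat \<Rightarrow> nat \<Rightarrow> real"
  assumes "q \<le> CARD('n::finite)"
    and "\<And>c b. (\<And>a. a < q \<Longrightarrow> (\<Sum>b<q. A a b * c b) = 0) \<Longrightarrow> b < q \<Longrightarrow> c b = 0"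
  shows "\<And>a b. a < q \<Longrightarrow> b < q \<Longrightarrow> (\<Sum>c<q. A a c * mat_inv_nat q A c b) = (if a = b then 1 else 0)"
    and "\<And>a b. a < q \<Longrightarrow> b < q \<Longrightarrow> (\<Sum>c<q. mat_inv_nat q A a c * A c b) = (if a = b then 1 else 0)"
proof -
  define inverse where "inverse B \<longleftrightarrow>
    (\<forall>a<q. \<forall>b<q. (\<Sum>c<q. A a c * B c b) = (if a = b then 1 else 0)
                \<and> (\<Sum>c<q. B a c * A c b) = (if a = b then 1 else 0))
    \<and> (\<forall>a b. q \<le> a \<or> q \<le> b \<longrightarrow> B a b = 0)" for B
  have "\<exists>!B. inverse B"
  proof (rule ex_ex1I)
    show "\<exists>B. inverse B"
      unfolding inverse_def using assms(1) by (rule nat_matrix_inverse_exists) (fact assms(2))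
    show "B' = B" if "inverse B'" "inverse B" for B B'
      using that unfolding inverse_def by (intro nat_matrix_inverse_unique[of q A]) blast+
  qed
  then have "inverse (mat_inv_nat q A)"
    unfolding mat_inv_nat_def inverse_def[abs_def] by (rule theI')
  then show "\<And>a b. a < q \<Longrightarrow> b < q \<Longrightarrow> (\<Sum>c<q. A a c * mat_inv_nat q A c b) = (if a = b then 1 else 0)"
    and "\<And>a b. a < q \<Longrightarrow> b < q \<Longrightarrow> (\<Sum>c<q. mat_inv_nat q A a c * A c b) = (if a = b then 1 else 0)"
    unfolding inverse_def by blast+
qed

lemma sum_nonpos_eq_0_if_nonneg:
  fixes f :: "'a \<Rightarrow> real"
  assumes "finite A" and nonpos: "\<And>x. x \<in> A \<Longrightarrow> f x \<le> 0" and "0 \<le> sum f A" and "x \<in> A"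
  shows "f x = 0"
proof -
  have "sum f A = 0"
    using sum_nonpos[of A f] nonpos assms(3) by fastforce
  then have "(\<Sum>x\<in>A. - f x) = 0"
    by (simp add: sum_negf)
  then show ?thesis
    using sum_nonneg_eq_0_iff[of A "\<lambda>x. - f x"] assms by fastforce
qed

lemma dim_add_le_if_inter_zero:
  fixes W E :: "(real^'n) set"
  assumes "subspace W" "subspace E" "W \<inter> E \<subseteq> {0}"
  shows "dim W + dim E \<le> CARD('n)"
proof -
  have "dim {x + y |x y. x \<in> W \<and> y \<in> E} + dim (W \<inter> E) = dim W + dim E"
    using assms(1,2) by (rule dim_sums_Int)
  moreover have "dim (W \<inter> E) = 0"
    using assms(3) by (simp add: dim_eq_0)
  moreover have "dim {x + y |x y. x \<in> W \<and> y \<in> E} \<le> CARD('n)"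
    by (rule dim_subset_UNIV_cart)
  ultimately show ?thesis by linarith
qed

lemma card_le_dim_orthogonal_complement:
  fixes V :: "(real^'n) set"
  assumes "finite V"
  shows "CARD('n) \<le> dim {v. \<forall>x\<in>V. orthogonal x v} + card V"
proof -
  have "{v. \<forall>x\<in>V. orthogonal x v} = {v. \<forall>x\<in>span V. orthogonal x v}"
    by (auto intro: span_base orthogonal_to_span simp: orthogonal_commute)
  then have "dim {v. \<forall>x\<in>V. orthogonal x v} = dim {v. \<forall>x\<in>span V. orthogonal x v}"
    by simp
  moreover have "dim {v. \<forall>x\<in>span V. orthogonal x v} + dim (span V) = CARD('n)"
    using dim_subspace_orthogonal_to_vectors[of "span V" UNIV] by (simp add: subspace_span)
  moreover have "dim (span V) \<le> card V"
    using dim_le_card'[OF assms] by simp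
  ultimately show ?thesis by linarith
qed

lemma affine_barycentric:
  fixes y :: "'i \<Rightarrow> 'a::real_inner"
  assumes m: "\<forall>x. m x = a \<bullet> x + b"
    and sum: "(\<Sum>i\<in>I. l i) = 1" and point: "(\<Sum>i\<in>I. l i *\<^sub>R y i) = x"
  shows "m x = (\<Sum>i\<in>I. l i * m (y i))"
proof -
  have "(\<Sum>i\<in>I. l i * m (y i)) = a \<bullet> (\<Sum>i\<in>I. l i *\<^sub>R y i) + b * (\<Sum>i\<in>I. l i)"
    by (simp add: m inner_sum_right sum.distrib sum_distrib_left algebra_simps)
  then show ?thesis
    using m sum point by simp
qed

locale barycentric_setting =
  fixes y :: "nat \<Rightarrow> real^'n" and l :: "nat \<Rightarrow> real" and P Lam :: "real^'n^'n"
    and ks :: "'n list" and N q :: nat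
  assumes N_def: "N = CARD('n)"
    and q_def: "q = card {i \<in> {0..N + 1}. l i < 0} - 1"
    and inj: "inj_on y {1..N + 1}"
    and aff_indep: "\<not> affine_dependent (y ` {1..N + 1})"
    and bary_sum: "(\<Sum>i = 1..N + 1. l i) = 1"
    and bary_pt: "(\<Sum>i = 1..N + 1. l i *\<^sub>R y i) = y 0"
    and l0: "l 0 = -1"
    and ordered: "\<forall>i j. 1 \<le> i \<and> i \<le> j \<and> j \<le> N + 1 \<longrightarrow> l j \<le> l i"
    and P_orth: "orthogonal_matrix P"
    and Lam_diag: "\<forall>a b. a \<noteq> b \<longrightarrow> Lam $ a $ b = 0"
    and G_eig: "(\<Sum>i = 0..N + 1. l i *\<^sub>R outer (y i) (y i)) = P ** Lam ** transpose P"
    and ks_distinct: "distinct ks"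
    and ks_set: "set ks = {k. Lam $ k $ k < 0}"
begin

definition Ipos :: "nat set" where "Ipos = {i \<in> {0..N + 1}. l i > 0}"
definition Ineg :: "nat set" where "Ineg = {i \<in> {0..N + 1}. l i < 0}"
definition Jneg :: "nat set" where "Jneg = {j \<in> {1..N + 1}. l j < 0}"

text \<open>\<open>jneg c\<close> is the \<open>c\<close>-th element of \<open>Jneg\<close>, so that row \<open>c\<close> of \<open>Y\<^sub>-\<close> (zero-based, as in
  \<open>M_mat\<close>) is \<open>y (jneg c) - y 0\<close>.\<close>
definition jneg :: "nat \<Rightarrow> nat" where "jneg c = N + 2 - q + c"

lemma sum_l_eq_0: "(\<Sum>k = 0..N + 1. l k) = 0"
  using bary_sum l0 by (subst sum.atLeast_Suc_atMost) auto

lemma sum_l_scaleR_eq_0: "(\<Sum>k = 0..N + 1. l k *\<^sub>R y k) = 0"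
  using bary_pt l0 by (subst sum.atLeast_Suc_atMost) auto

lemma sum_l_scaleR_diff_eq_0: "(\<Sum>k = 1..N + 1. l k *\<^sub>R (y k - y 0)) = 0"
  using bary_pt bary_sum by (simp add: scaleR_diff_right sum_subtractf scaleR_sum_left[symmetric])

lemma l_1_pos: "l 1 > 0"
proof (rule ccontr)
  assume "\<not> l 1 > 0"
  then have "l i \<le> 0" if "i \<in> {1..N + 1}" for i
    using ordered that by (metis atLeastAtMost_iff not_le order_trans order_refl)
  then have "(\<Sum>i = 1..N + 1. l i) \<le> 0" by (intro sum_nonpos) auto
  then show False using bary_sum by simp
qed

lemma Ineg_eq_insert: "Ineg = insert 0 Jneg"
  using l0 by (auto simp: Ineg_def Jneg_def)

lemma q_eq_card_Jneg: "q = card Jneg"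
  unfolding q_def Ineg_def[symmetric] Ineg_eq_insert by (simp add: Jneg_def)

lemma Jneg_subset: "Jneg \<subseteq> {2..N + 1}"
  using l_1_pos by (auto simp: Jneg_def) (metis One_nat_def Suc_1 le_antisym not_less_eq_eq order.asym)

lemma q_le_N: "q \<le> N"
  using card_mono[OF _ Jneg_subset] by (simp add: q_eq_card_Jneg)

lemma Jneg_eq: "Jneg = {N + 2 - q..N + 1}"
proof -
  have "Jneg = {Suc (N + 1) - card Jneg..N + 1}"
  proof (rule upward_closed_eq_atLeastAtMost[of _ 1])
    show "Jneg \<subseteq> {1..N + 1}" by (auto simp: Jneg_def)
    fix x z assume "x \<in> Jneg" "x \<le> z" "z \<le> N + 1"
    then show "z \<in> Jneg"
      using ordered by (auto simp: Jneg_def) (meson le_less_trans order_trans)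
  qed
  then show ?thesis by (simp add: q_eq_card_Jneg)
qed

lemma Jneg_image: "Jneg = jneg ` {..<q}"
proof -
  have "{N + 2 - q..N + 1} = (\<lambda>c. N + 2 - q + c) ` {..<q}"
  proof
    show "(\<lambda>c. N + 2 - q + c) ` {..<q} \<subseteq> {N + 2 - q..N + 1}" using q_le_N by auto
    show "{N + 2 - q..N + 1} \<subseteq> (\<lambda>c. N + 2 - q + c) ` {..<q}"
    proof
      fix x assume "x \<in> {N + 2 - q..N + 1}"
      then have "x = N + 2 - q + (x - (N + 2 - q))" "x - (N + 2 - q) < q" using q_le_N by auto
      then show "x \<in> (\<lambda>c. N + 2 - q + c) ` {..<q}" by blast
    qed
  qed
  then show ?thesis by (simp add: Jneg_eq jneg_def)
qed

lemma sum_Jneg: "(\<Sum>j\<in>Jneg. h j) = (\<Sum>c<q. h (jneg c))"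
  unfolding Jneg_image by (rule sum.reindex[unfolded o_def]) (auto simp: inj_on_def jneg_def)

lemma sum_Ineg: "(\<Sum>j\<in>Ineg. h j) = h 0 + (\<Sum>c<q. h (jneg c))"
  unfolding Ineg_eq_insert by (simp add: Jneg_def sum_Jneg[symmetric])

lemma Ipos_subset: "Ipos \<subseteq> {1..N + 1}"
proof
  fix i assume "i \<in> Ipos"
  moreover have "i \<noteq> 0" using \<open>i \<in> Ipos\<close> l0 by (cases i) (auto simp: Ipos_def)
  ultimately show "i \<in> {1..N + 1}" by (auto simp: Ipos_def)
qed

lemma sum_Ipos_Ineg: "(\<Sum>k = 0..N + 1. l k * X k) = (\<Sum>k\<in>Ipos. l k * X k) + (\<Sum>k\<in>Ineg. l k * X k)"
proof -
  have "(\<Sum>k = 0..N + 1. l k * X k) = (\<Sum>k\<in>Ipos \<union> Ineg. l k * X k)"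
    by (rule sum.mono_neutral_right) (auto simp: Ipos_def Ineg_def)
  also have "\<dots> = (\<Sum>k\<in>Ipos. l k * X k) + (\<Sum>k\<in>Ineg. l k * X k)"
    by (rule sum.union_disjoint) (auto simp: Ipos_def Ineg_def)
  finally show ?thesis .
qed

lemma sum_Ipos_Jneg: "(\<Sum>k = 1..N + 1. l k * X k) = (\<Sum>k\<in>Ipos. l k * X k) + (\<Sum>k\<in>Jneg. l k * X k)"
  using sum_Ipos_Ineg[of X] l0 sum_Ineg[of "\<lambda>k. l k * X k"]
  by (simp add: sum.atLeast_Suc_atMost sum_Jneg)

lemma Lam_offdiag: "a \<noteq> b \<Longrightarrow> Lam $ a $ b = 0"
  using Lam_diag by blast

lemma column_inner: "column i P \<bullet> column j P = (if i = j then 1 else 0)"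
  by (rule orthogonal_matrix_column_inner[OF P_orth])

definition G :: "real^'n^'n" where "G = (\<Sum>i = 0..N + 1. l i *\<^sub>R outer (y i) (y i))"

text \<open>Since \<open>\<Sum>\<^sub>i \<ell>\<^sub>i = 0\<close> and \<open>\<Sum>\<^sub>i \<ell>\<^sub>i y\<^sub>i = 0\<close>, the points may be translated by any \<open>c\<close>.\<close>
lemma G_quadratic_form: "a \<bullet> (G *v b) = (\<Sum>i = 0..N + 1. l i * ((y i - c) \<bullet> a) * ((y i - c) \<bullet> b))"
proof -
  have outer_form: "a \<bullet> (outer u u *v b) = (u \<bullet> a) * (u \<bullet> b)" for u
    by (simp add: outer_def matrix_vector_mult_def inner_vec_def sum_distrib_left sum_distrib_right
        algebra_simps) (subst sum.swap, simp add: algebra_simps)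
  have mat_sum_vec: "(\<Sum>i\<in>S. A i) *v b = (\<Sum>i\<in>S. A i *v b)" for S and A :: "nat \<Rightarrow> real^'n^'n"
    by (induction S rule: infinite_finite_induct) (auto simp: matrix_vector_mult_add_rdistrib)
  have moment: "(\<Sum>i = 0..N + 1. l i * (y i \<bullet> w)) = 0" for w
  proof -
    have "(\<Sum>i = 0..N + 1. l i * (y i \<bullet> w)) = (\<Sum>i = 0..N + 1. l i *\<^sub>R y i) \<bullet> w"
      by (simp only: inner_sum_left inner_scaleR_left)
    also have "\<dots> = 0"
      by (simp only: sum_l_scaleR_eq_0 inner_zero_left)
    finally show ?thesis .
  qed
  have "a \<bullet> (G *v b) = (\<Sum>i = 0..N + 1. l i * (y i \<bullet> a) * (y i \<bullet> b))"
    unfolding G_def mat_sum_vec inner_sum_right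
    by (intro sum.cong refl) (simp add: scaleR_matrix_vector_assoc[symmetric] outer_form)
  also have "\<dots> = (\<Sum>i = 0..N + 1. l i * ((y i - c) \<bullet> a) * ((y i - c) \<bullet> b))
      + (c \<bullet> b) * (\<Sum>i = 0..N + 1. l i * (y i \<bullet> a)) + (c \<bullet> a) * (\<Sum>i = 0..N + 1. l i * (y i \<bullet> b))
      - (c \<bullet> a) * (c \<bullet> b) * (\<Sum>i = 0..N + 1. l i)"
    by (simp add: inner_diff_left sum_distrib_left sum_subtractf sum.distrib algebra_simps)
  finally show ?thesis
    by (simp only: moment sum_l_eq_0 mult_zero_right add_0_right diff_zero)
qed

lemma G_eigen_form: "u \<bullet> (G *v v) = (\<Sum>k\<in>UNIV. Lam $ k $ k * (column k P \<bullet> u) * (column k P \<bullet> v))"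
  unfolding G_def G_eig by (rule inner_diagonal_conj[OF Lam_offdiag])

lemma G_column: "column a P \<bullet> (G *v column b P) = Lam $ a $ b"
proof -
  have "column a P \<bullet> (G *v column b P) = (\<Sum>k\<in>UNIV. if k = a then (if a = b then Lam $ a $ a else 0) else 0)"
    unfolding G_eigen_form by (intro sum.cong) (auto simp: column_inner)
  then show ?thesis
    using Lam_offdiag by simp
qed

lemma G_form_y0:
  "(\<Sum>k = 1..N + 1. l k * (((y k - y 0) \<bullet> u) * (w \<bullet> y k))) = u \<bullet> (G *v w)"
proof -
  have "l k * (((y k - y 0) \<bullet> u) * (w \<bullet> y k))
      = l k * ((y k - y 0) \<bullet> u) * ((y k - y 0) \<bullet> w) + ((l k *\<^sub>R (y k - y 0)) \<bullet> u) * (w \<bullet> y 0)" for k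
    by (simp add: inner_diff_left inner_diff_right inner_commute algebra_simps)
  then have "(\<Sum>k = 1..N + 1. l k * (((y k - y 0) \<bullet> u) * (w \<bullet> y k)))
      = (\<Sum>k = 1..N + 1. l k * ((y k - y 0) \<bullet> u) * ((y k - y 0) \<bullet> w))
        + ((\<Sum>k = 1..N + 1. l k *\<^sub>R (y k - y 0)) \<bullet> u) * (w \<bullet> y 0)"
    by (simp only: sum.distrib inner_sum_left sum_distrib_right)
  also have "(\<Sum>k = 1..N + 1. l k * ((y k - y 0) \<bullet> u) * ((y k - y 0) \<bullet> w))
      = (\<Sum>k = 0..N + 1. l k * ((y k - y 0) \<bullet> u) * ((y k - y 0) \<bullet> w))"
    by (subst (2) sum.atLeast_Suc_atMost) simp_all
  finally show ?thesis
    unfolding sum_l_scaleR_diff_eq_0 G_quadratic_form[of u w "y 0"] by simp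
qed

lemma span_edges: "span ((\<lambda>i. y i - y 1) ` {2..N + 1}) = UNIV"
proof -
  have split: "y ` {1..N + 1} = insert (y 1) (y ` {2..N + 1})"
    by (auto simp: image_def) (metis One_nat_def Suc_1 atLeastAtMost_iff le_antisym not_less_eq_eq)
  have "y 1 \<notin> y ` {2..N + 1}"
    using inj_onD[OF inj] by fastforce
  have "independent ((\<lambda>x. - y 1 + x) ` y ` {2..N + 1})"
    using aff_indep unfolding split affine_dependent_iff_dependent[OF \<open>y 1 \<notin> y ` {2..N + 1}\<close>] .
  moreover have "(\<lambda>x. - y 1 + x) ` y ` {2..N + 1} = (\<lambda>i. y i - y 1) ` {2..N + 1}"
    by (auto simp: image_def)
  moreover have "inj_on (\<lambda>i. y i - y 1) {2..N + 1}"
    using inj by (auto simp: inj_on_def)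
  then have "card ((\<lambda>i. y i - y 1) ` {2..N + 1}) = N"
    by (simp add: card_image)
  ultimately have "UNIV \<subseteq> span ((\<lambda>i. y i - y 1) ` {2..N + 1})"
    by (intro card_ge_dim_independent) (auto simp: N_def)
  then show ?thesis by auto
qed

text \<open>On vectors orthogonal to the negative eigenvectors the form of \<open>G\<close> is nonnegative, while
  orthogonality to the edges \<open>y\<^sub>k - y\<^sub>1\<close> with \<open>\<ell>\<^sub>k \<ge> 0\<close> leaves only nonpositive terms.\<close>
lemma eq_0_if_orthogonal_nonneg_edges_neg_eigenvectors:
  assumes edges: "\<And>k. k \<in> {2..N + 1} \<Longrightarrow> 0 \<le> l k \<Longrightarrow> (y k - y 1) \<bullet> v = 0"
    and eigenvectors: "\<And>k. k \<in> set ks \<Longrightarrow> column k P \<bullet> v = 0"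
  shows "v = 0"
proof -
  have term_nonpos: "l i * ((y i - y 1) \<bullet> v)^2 \<le> 0" if "i \<in> {0..N + 1}" for i
  proof (cases "l i < 0")
    case False
    then have "i \<in> {2..N + 1} \<or> i = 1" using that l0 by (cases "i = 0") auto
    then show ?thesis using edges False by auto
  qed (simp add: mult_nonpos_nonneg)
  have "0 \<le> v \<bullet> (G *v v)"
    unfolding G_eigen_form
  proof (rule sum_nonneg)
    fix k
    show "0 \<le> Lam $ k $ k * (column k P \<bullet> v) * (column k P \<bullet> v)"
    proof (cases "k \<in> set ks")
      case False
      then have "0 \<le> Lam $ k $ k" using ks_set by auto
      then show ?thesis by (metis mult.assoc mult_nonneg_nonneg zero_le_square)
    qed (simp add: eigenvectors)
  qed
  also have "v \<bullet> (G *v v) = (\<Sum>i = 0..N + 1. l i * ((y i - y 1) \<bullet> v)^2)"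
    unfolding G_quadratic_form[of v v "y 1"] by (simp add: power2_eq_square mult.assoc)
  finally have "0 \<le> (\<Sum>i = 0..N + 1. l i * ((y i - y 1) \<bullet> v)^2)" .
  then have term_zero: "l i * ((y i - y 1) \<bullet> v)^2 = 0" if "i \<in> {0..N + 1}" for i
    using term_nonpos that
    by (intro sum_nonpos_eq_0_if_nonneg[where f="\<lambda>i. l i * ((y i - y 1) \<bullet> v)^2" and A="{0..N + 1}"])
      simp_all
  have "orthogonal v v"
  proof (rule orthogonal_to_span)
    show "v \<in> span ((\<lambda>i. y i - y 1) ` {2..N + 1})" unfolding span_edges ..
    fix x assume "x \<in> (\<lambda>i. y i - y 1) ` {2..N + 1}"
    then obtain i where "i \<in> {2..N + 1}" "x = y i - y 1" by auto
    then show "orthogonal v x"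
      using edges[of i] term_zero[of i] by (cases "l i < 0") (auto simp: orthogonal_def inner_commute)
  qed
  then show ?thesis by (simp add: orthogonal_def)
qed

text \<open>Equality holds by Sylvester's law of inertia, but only this inequality is needed.\<close>
lemma q_le_length_ks: "q \<le> length ks"
proof -
  define S where "S = {k \<in> {2..N + 1}. 0 \<le> l k}"
  define W where "W = {v. \<forall>x\<in>(\<lambda>k. y k - y 1) ` S. orthogonal x v}"
  define E where "E = {v. \<forall>x\<in>(\<lambda>k. column k P) ` set ks. orthogonal x v}"
  have "{2..N + 1} = S \<union> Jneg" "S \<inter> Jneg = {}"
    using Jneg_subset by (auto simp: S_def Jneg_def)
  then have "card {2..N + 1} = card S + card Jneg"
    by (metis card_Un_disjoint finite_Un finite_atLeastAtMost)
  then have "card S + q = N"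
    by (simp add: q_eq_card_Jneg)
  moreover have "N \<le> dim W + card ((\<lambda>k. y k - y 1) ` S)"
    unfolding W_def N_def by (rule card_le_dim_orthogonal_complement) (simp add: S_def)
  moreover have "card ((\<lambda>k. y k - y 1) ` S) \<le> card S"
    by (rule card_image_le) (simp add: S_def)
  moreover have "N \<le> dim E + card ((\<lambda>k. column k P) ` set ks)"
    unfolding E_def N_def by (rule card_le_dim_orthogonal_complement) simp
  moreover have "card ((\<lambda>k. column k P) ` set ks) \<le> length ks"
    using card_image_le[OF finite_set, of "\<lambda>k. column k P" ks] card_length[of ks] by linarith
  moreover have "dim W + dim E \<le> N"
    unfolding N_def
  proof (rule dim_add_le_if_inter_zero)
    show "subspace W" "subspace E"
      unfolding W_def E_def by (rule subspace_orthogonal_to_vectors)+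
    show "W \<inter> E \<subseteq> {0}"
      using eq_0_if_orthogonal_nonneg_edges_neg_eigenvectors
      by (auto simp: W_def E_def S_def orthogonal_def)
  qed
  ultimately show ?thesis by linarith
qed

definition Kneg :: "'n set" where "Kneg = (\<lambda>b. ks ! b) ` {..<q}"

lemma nth_ks_inj: "inj_on (\<lambda>b. ks ! b) {..<q}"
  using ks_distinct q_le_length_ks by (auto simp: inj_on_def nth_eq_iff_index_eq)

lemma nth_ks_neg: "b < q \<Longrightarrow> Lam $ (ks ! b) $ (ks ! b) < 0"
  using ks_set q_le_length_ks nth_mem[of b ks] by auto

lemma sum_Kneg: "(\<Sum>z\<in>Kneg. h z) = (\<Sum>b<q. h (ks ! b))"
  unfolding Kneg_def by (rule sum.reindex[OF nth_ks_inj, unfolded o_def])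

lemma column_nth_inner_sum:
  assumes "b' < q"
  shows "column (ks ! b') P \<bullet> (\<Sum>b<q. c b *\<^sub>R column (ks ! b) P) = c b'"
proof -
  have "column (ks ! b') P \<bullet> (\<Sum>b<q. c b *\<^sub>R column (ks ! b) P) = (\<Sum>b<q. if b = b' then c b else 0)"
    unfolding inner_sum_right
    using assms inj_onD[OF nth_ks_inj] by (intro sum.cong) (auto simp: column_inner)
  then show ?thesis using assms by simp
qed

lemma column_notin_inner_sum:
  assumes "z \<notin> Kneg"
  shows "column z P \<bullet> (\<Sum>b<q. c b *\<^sub>R column (ks ! b) P) = 0"
  using assms by (auto simp: inner_sum_right column_inner Kneg_def intro!: sum.neutral)

definition YnegP :: "nat \<Rightarrow> nat \<Rightarrow> real" where
  "YnegP a b = (y (jneg a) - y 0) \<bullet> column (ks ! b) P"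

text \<open>A kernel vector \<open>c\<close> of \<open>Y\<^sub>- P\<^sub>-\<close> gives \<open>v = P\<^sub>- c\<close> on which the form of \<open>G\<close> is both
  nonnegative (translate by \<open>y\<^sub>0\<close>: all negative-weight terms vanish) and \<open>\<Sum> \<lambda>\<^sub>b c\<^sub>b\<^sup>2 \<le> 0\<close>.\<close>
lemma YnegP_kernel:
  assumes ker: "\<And>a. a < q \<Longrightarrow> (\<Sum>b<q. YnegP a b * c b) = 0" and "b < q"
  shows "c b = 0"
proof -
  define v where "v = (\<Sum>b<q. c b *\<^sub>R column (ks ! b) P)"
  have Jneg_orth: "(y j - y 0) \<bullet> v = 0" if j: "j \<in> Jneg" for j
  proof -
    obtain a where "a < q" "j = jneg a" using j Jneg_image by auto
    then show ?thesis
      using ker[of a] by (simp add: v_def inner_sum_right YnegP_def mult.commute)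
  qed
  have "0 \<le> v \<bullet> (G *v v)"
    unfolding G_quadratic_form[of v v "y 0"]
  proof (rule sum_nonneg)
    fix i assume "i \<in> {0..N + 1}"
    show "0 \<le> l i * ((y i - y 0) \<bullet> v) * ((y i - y 0) \<bullet> v)"
    proof (cases "l i < 0")
      case True
      then have "i = 0 \<or> i \<in> Jneg" using \<open>i \<in> {0..N + 1}\<close> Ineg_eq_insert by (auto simp: Ineg_def)
      then show ?thesis using Jneg_orth by auto
    qed (simp add: mult.assoc)
  qed
  also have "v \<bullet> (G *v v) = (\<Sum>b<q. Lam $ (ks ! b) $ (ks ! b) * (c b)^2)"
  proof -
    have "v \<bullet> (G *v v) = (\<Sum>k\<in>Kneg. Lam $ k $ k * (column k P \<bullet> v) * (column k P \<bullet> v))"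
      unfolding G_eigen_form
      by (rule sum.mono_neutral_right) (auto simp: v_def column_notin_inner_sum)
    then show ?thesis
      by (simp add: sum_Kneg v_def column_nth_inner_sum power2_eq_square mult.assoc)
  qed
  finally have "0 \<le> (\<Sum>b<q. Lam $ (ks ! b) $ (ks ! b) * (c b)^2)" .
  then have "Lam $ (ks ! b) $ (ks ! b) * (c b)^2 = 0"
    using nth_ks_neg \<open>b < q\<close>
    by (intro sum_nonpos_eq_0_if_nonneg[where f="\<lambda>b. Lam $ (ks ! b) $ (ks ! b) * (c b)^2" and A="{..<q}"])
      (auto simp: mult_le_0_iff less_imp_le)
  then show ?thesis using nth_ks_neg[OF \<open>b < q\<close>] by simp
qed

definition Yinv :: "nat \<Rightarrow> nat \<Rightarrow> real" where "Yinv = mat_inv_nat q YnegP"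

lemma q_le_card: "q \<le> CARD('n)"
  using q_le_N by (simp add: N_def)

lemma Yinv_right: "a < q \<Longrightarrow> c < q \<Longrightarrow> (\<Sum>b<q. YnegP a b * Yinv b c) = (if a = c then 1 else 0)"
  unfolding Yinv_def by (rule mat_inv_nat_inverse(1)[where 'n='n], rule q_le_card, rule YnegP_kernel)

lemma Yinv_left: "a < q \<Longrightarrow> c < q \<Longrightarrow> (\<Sum>b<q. Yinv a b * YnegP b c) = (if a = c then 1 else 0)"
  unfolding Yinv_def by (rule mat_inv_nat_inverse(2)[where 'n='n], rule q_le_card, rule YnegP_kernel)

definition Mrow :: "nat \<Rightarrow> nat \<Rightarrow> real" where
  "Mrow i c = l i * (\<Sum>b<q. ((y i - y 0) \<bullet> column (ks ! b) P) * Yinv b c)"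

lemma M_mat_eq: "M_mat N p q l y P ks (i - 1) c = Mrow i c" if "1 \<le> i"
proof -
  have "(\<lambda>a b. (y (N + 2 - q + a) - y 0) \<bullet> column (ks ! b) P) = YnegP"
    by (simp add: fun_eq_iff YnegP_def jneg_def)
  then show ?thesis
    using that by (simp add: M_mat_def Let_def Mrow_def Yinv_def)
qed

lemma mu_jneg: "mu N p q l y P ks i (jneg c) = Mrow i c" if "i \<in> Ipos" "c < q"
proof -
  have "jneg c \<noteq> 0" "jneg c - (N + 2 - q) = c" using q_le_N by (auto simp: jneg_def)
  then show ?thesis
    using M_mat_eq that Ipos_subset by (auto simp: mu_def)
qed

lemma mu_zero: "mu N p q l y P ks i 0 = l i - (\<Sum>c<q. Mrow i c)" if "i \<in> Ipos"
proof -
  have "(\<Sum>j\<in>{N + 2 - q..N + 1}. M_mat N p q l y P ks (i - 1) (j - (N + 2 - q)))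
      = (\<Sum>j\<in>Jneg. Mrow i (j - (N + 2 - q)))"
    unfolding Jneg_eq using M_mat_eq that Ipos_subset by (intro sum.cong) auto
  also have "\<dots> = (\<Sum>c<q. Mrow i c)" by (simp add: sum_Jneg jneg_def)
  finally show ?thesis by (simp add: mu_def)
qed

lemma mu_row_sum: "(\<Sum>j\<in>Ineg. mu N p q l y P ks i j) = l i" if "i \<in> Ipos"
  using that by (simp add: sum_Ineg mu_jneg mu_zero)

lemma mu_row_moment:
  assumes i: "i \<in> Ipos" and b': "b' < q"
  shows "(\<Sum>j\<in>Ineg. mu N p q l y P ks i j * (column (ks ! b') P \<bullet> y j))
       = l i * (column (ks ! b') P \<bullet> y i)"
proof -
  let ?w = "column (ks ! b') P"
  have "(\<Sum>j\<in>Ineg. mu N p q l y P ks i j * (?w \<bullet> (y j - y 0))) = (\<Sum>c<q. Mrow i c * YnegP c b')"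
    using i by (simp add: sum_Ineg mu_jneg YnegP_def inner_commute)
  also have "\<dots> = l i * (\<Sum>c<q. \<Sum>b<q. ((y i - y 0) \<bullet> column (ks ! b) P) * Yinv b c * YnegP c b')"
    by (simp add: Mrow_def sum_distrib_left sum_distrib_right mult.assoc)
  also have "\<dots> = l i * (\<Sum>b<q. ((y i - y 0) \<bullet> column (ks ! b) P) * (\<Sum>c<q. Yinv b c * YnegP c b'))"
    by (subst sum.swap) (simp add: sum_distrib_left mult.assoc)
  also have "\<dots> = l i * (?w \<bullet> (y i - y 0))"
    using b' by (simp add: Yinv_left inner_commute if_distrib[of "\<lambda>t. _ * t"] cong: if_cong)
  finally have "(\<Sum>j\<in>Ineg. mu N p q l y P ks i j * (?w \<bullet> (y j - y 0))) = l i * (?w \<bullet> (y i - y 0))" .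
  moreover have "(\<Sum>j\<in>Ineg. mu N p q l y P ks i j * (?w \<bullet> y j))
      = (\<Sum>j\<in>Ineg. mu N p q l y P ks i j * (?w \<bullet> (y j - y 0)))
        + (\<Sum>j\<in>Ineg. mu N p q l y P ks i j) * (?w \<bullet> y 0)"
    by (simp add: inner_diff_right algebra_simps sum_subtractf sum_distrib_right sum_distrib_left)
  moreover note mu_row_sum[OF i]
  ultimately show ?thesis
    by (simp add: inner_diff_right algebra_simps)
qed

text \<open>The defining property of \<open>M\<close>: its columns undo \<open>Y\<^sub>- P\<^sub>-\<close> on every weighted function \<open>h\<close>
  whose \<open>\<ell>\<close>-moments against the negative eigenvectors vanish.\<close>
lemma Mrow_column_combination:
  assumes moments: "\<And>b. b < q \<Longrightarrow> (\<Sum>k = 1..N + 1. l k * (((y k - y 0) \<bullet> column (ks ! b) P) * h k)) = 0"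
    and c: "c < q"
  shows "(\<Sum>i\<in>Ipos. Mrow i c * h i) = - l (jneg c) * h (jneg c)"
proof -
  have Ipos_moment: "(\<Sum>i\<in>Ipos. l i * (((y i - y 0) \<bullet> column (ks ! b) P) * h i))
      = - (\<Sum>c'<q. l (jneg c') * (YnegP c' b * h (jneg c')))" if "b < q" for b
    using moments[OF that] unfolding sum_Ipos_Jneg sum_Jneg by (simp add: YnegP_def add_eq_0_iff)
  have "(\<Sum>i\<in>Ipos. Mrow i c * h i)
      = (\<Sum>i\<in>Ipos. \<Sum>b<q. Yinv b c * (l i * (((y i - y 0) \<bullet> column (ks ! b) P) * h i)))"
    unfolding Mrow_def by (simp add: sum_distrib_left sum_distrib_right algebra_simps)
  also have "\<dots> = (\<Sum>b<q. Yinv b c * (\<Sum>i\<in>Ipos. l i * (((y i - y 0) \<bullet> column (ks ! b) P) * h i)))"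
    by (subst sum.swap) (simp only: sum_distrib_left)
  also have "\<dots> = (\<Sum>b<q. Yinv b c * - (\<Sum>c'<q. l (jneg c') * (YnegP c' b * h (jneg c'))))"
    by (intro sum.cong refl, subst Ipos_moment) auto
  also have "\<dots> = - (\<Sum>b<q. \<Sum>c'<q. l (jneg c') * h (jneg c') * YnegP c' b * Yinv b c)"
    by (simp add: sum_distrib_left sum_negf algebra_simps)
  also have "\<dots> = - (\<Sum>c'<q. l (jneg c') * h (jneg c') * (\<Sum>b<q. YnegP c' b * Yinv b c))"
    by (subst sum.swap) (simp add: sum_distrib_left mult.assoc)
  also have "\<dots> = - l (jneg c) * h (jneg c)"
    using c by (simp add: Yinv_right if_distrib[of "\<lambda>t. _ * t"] cong: if_cong)
  finally show ?thesis .
qed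

lemma mu_column_combination:
  assumes moments: "\<And>b. b < q \<Longrightarrow> (\<Sum>k = 1..N + 1. l k * (((y k - y 0) \<bullet> column (ks ! b) P) * h k)) = 0"
    and mean: "(\<Sum>k = 1..N + 1. l k * h k) = h 0"
    and j: "j \<in> Ineg"
  shows "(\<Sum>i\<in>Ipos. mu N p q l y P ks i j * h i) = - l j * h j"
proof (cases "j = 0")
  case False
  then obtain c where c: "c < q" "j = jneg c"
    using j Ineg_eq_insert Jneg_image by auto
  then have "(\<Sum>i\<in>Ipos. mu N p q l y P ks i j * h i) = (\<Sum>i\<in>Ipos. Mrow i c * h i)"
    by (intro sum.cong refl) (simp add: mu_jneg)
  then show ?thesis
    using Mrow_column_combination[OF moments c(1)] c(2) by simp
next
  case True
  have "(\<Sum>i\<in>Ipos. mu N p q l y P ks i 0 * h i)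
      = (\<Sum>i\<in>Ipos. l i * h i) - (\<Sum>c<q. \<Sum>i\<in>Ipos. Mrow i c * h i)"
    by (simp add: mu_zero left_diff_distrib sum_subtractf sum_distrib_right sum.swap[of _ Ipos "{..<q}"])
  also have "\<dots> = (\<Sum>i\<in>Ipos. l i * h i) + (\<Sum>c<q. l (jneg c) * h (jneg c))"
    by (simp add: Mrow_column_combination[OF moments] sum_negf)
  also have "\<dots> = h 0"
    using mean unfolding sum_Ipos_Jneg sum_Jneg by simp
  finally show ?thesis
    using True l0 by simp
qed

lemma mu_col_sum: "(\<Sum>i\<in>Ipos. mu N p q l y P ks i j) = - l j" if "j \<in> Ineg"
proof -
  have "(\<Sum>k = 1..N + 1. l k * (((y k - y 0) \<bullet> column (ks ! b) P) * 1)) = 0" for b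
  proof -
    have "(\<Sum>k = 1..N + 1. l k * (((y k - y 0) \<bullet> column (ks ! b) P) * 1))
        = (\<Sum>k = 1..N + 1. l k *\<^sub>R (y k - y 0)) \<bullet> column (ks ! b) P"
      by (simp only: inner_sum_left inner_scaleR_left mult_1_right)
    then show ?thesis by (simp only: sum_l_scaleR_diff_eq_0 inner_zero_left)
  qed
  then show ?thesis
    using mu_column_combination[of "\<lambda>_. 1" j] bary_sum that by simp
qed

lemma mu_col_moment:
  assumes j: "j \<in> Ineg" and z: "z \<notin> Kneg"
  shows "(\<Sum>i\<in>Ipos. mu N p q l y P ks i j * (column z P \<bullet> y i)) = - l j * (column z P \<bullet> y j)"
proof (rule mu_column_combination[OF _ _ j])
  fix b assume "b < q"
  then have "ks ! b \<noteq> z" using z by (auto simp: Kneg_def)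
  then show "(\<Sum>k = 1..N + 1. l k * (((y k - y 0) \<bullet> column (ks ! b) P) * (column z P \<bullet> y k))) = 0"
    unfolding G_form_y0 G_column by (rule Lam_offdiag)
next
  have "(\<Sum>k = 1..N + 1. l k * (column z P \<bullet> y k)) = column z P \<bullet> (\<Sum>k = 1..N + 1. l k *\<^sub>R y k)"
    by (simp only: inner_sum_right inner_scaleR_right)
  then show "(\<Sum>k = 1..N + 1. l k * (column z P \<bullet> y k)) = column z P \<bullet> y 0"
    by (simp only: bary_pt)
qed

definition Pneg :: "real^'n \<Rightarrow> real^'n" where
  "Pneg v = (\<Sum>b<q. (column (ks ! b) P \<bullet> v) *\<^sub>R column (ks ! b) P)"

lemma Pneg_eq: "Pneg v = (\<Sum>z\<in>Kneg. (column z P \<bullet> v) *\<^sub>R column z P)"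
  by (simp add: Pneg_def sum_Kneg)

lemma diff_Pneg_eq: "v - Pneg v = (\<Sum>z\<in>-Kneg. (column z P \<bullet> v) *\<^sub>R column z P)"
proof -
  have "v = (\<Sum>z\<in>Kneg \<union> -Kneg. (column z P \<bullet> v) *\<^sub>R column z P)"
    using orthogonal_matrix_column_expansion[OF P_orth, of v] by simp
  also have "\<dots> = Pneg v + (\<Sum>z\<in>-Kneg. (column z P \<bullet> v) *\<^sub>R column z P)"
    unfolding Pneg_eq by (rule sum.union_disjoint) auto
  finally show ?thesis by (simp add: algebra_simps)
qed

lemma mu_row_mean:
  "(\<Sum>j\<in>Ineg. mu N p q l y P ks i j *\<^sub>R Pneg (y j)) = (\<Sum>j\<in>Ineg. mu N p q l y P ks i j) *\<^sub>R Pneg (y i)"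
  if i: "i \<in> Ipos"
proof -
  have "(\<Sum>j\<in>Ineg. mu N p q l y P ks i j *\<^sub>R Pneg (y j))
      = (\<Sum>b<q. (\<Sum>j\<in>Ineg. mu N p q l y P ks i j * (column (ks ! b) P \<bullet> y j)) *\<^sub>R column (ks ! b) P)"
    by (simp add: Pneg_def scaleR_sum_right scaleR_sum_left sum.swap[of _ Ineg "{..<q}"])
  also have "\<dots> = l i *\<^sub>R Pneg (y i)"
    by (simp add: mu_row_moment[OF i] Pneg_def scaleR_sum_right)
  finally show ?thesis by (simp add: mu_row_sum[OF i])
qed

lemma mu_col_mean:
  "(\<Sum>i\<in>Ipos. mu N p q l y P ks i j *\<^sub>R (y i - Pneg (y i)))
     = (\<Sum>i\<in>Ipos. mu N p q l y P ks i j) *\<^sub>R (y j - Pneg (y j))"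
  if j: "j \<in> Ineg"
proof -
  have "(\<Sum>i\<in>Ipos. mu N p q l y P ks i j *\<^sub>R (y i - Pneg (y i)))
      = (\<Sum>z\<in>-Kneg. (\<Sum>i\<in>Ipos. mu N p q l y P ks i j * (column z P \<bullet> y i)) *\<^sub>R column z P)"
    by (simp add: diff_Pneg_eq scaleR_sum_right scaleR_sum_left sum.swap[of _ Ipos "-Kneg"])
  also have "\<dots> = (- l j) *\<^sub>R (y j - Pneg (y j))"
    by (simp add: mu_col_moment[OF j] diff_Pneg_eq scaleR_sum_right)
  finally show ?thesis by (simp add: mu_col_sum[OF j])
qed

lemma mu_coupling_sum:
  "(\<Sum>i\<in>Ipos. \<Sum>j\<in>Ineg. mu N p q l y P ks i j * (F i - F j)) = (\<Sum>k = 0..N + 1. l k * F k)"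
proof -
  have "(\<Sum>i\<in>Ipos. \<Sum>j\<in>Ineg. mu N p q l y P ks i j * (F i - F j))
      = (\<Sum>i\<in>Ipos. (\<Sum>j\<in>Ineg. mu N p q l y P ks i j) * F i)
        - (\<Sum>j\<in>Ineg. (\<Sum>i\<in>Ipos. mu N p q l y P ks i j) * F j)"
    by (simp add: right_diff_distrib sum_subtractf sum_distrib_right sum.swap[of _ Ipos Ineg])
  also have "\<dots> = (\<Sum>i\<in>Ipos. l i * F i) + (\<Sum>j\<in>Ineg. l j * F j)"
    by (simp add: mu_row_sum mu_col_sum sum_negf)
  also have "\<dots> = (\<Sum>k = 0..N + 1. l k * F k)"
    by (rule sum_Ipos_Ineg[symmetric])
  finally show ?thesis .
qed

lemma sum_l_column_sq: "(\<Sum>k = 0..N + 1. l k * (column z P \<bullet> y k)^2) = Lam $ z $ z"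
  using G_quadratic_form[of "column z P" "column z P" 0] G_column[of z z]
  by (simp add: power2_eq_square inner_commute mult.assoc)

lemma sum_l_proj_diff_le:
  "(\<Sum>k = 0..N + 1. l k * (norm (y k - Pneg (y k))^2 - norm (Pneg (y k))^2))
     \<le> (\<Sum>z\<in>UNIV. \<bar>Lam $ z $ z\<bar>)"
proof -
  have "norm (v - Pneg v)^2 = (\<Sum>z\<in>-Kneg. (column z P \<bullet> v)^2)" for v
    by (simp only: diff_Pneg_eq norm_sum_orthogonal_columns[OF P_orth])
  moreover have "norm (Pneg v)^2 = (\<Sum>z\<in>Kneg. (column z P \<bullet> v)^2)" for v
    by (simp only: Pneg_eq norm_sum_orthogonal_columns[OF P_orth])
  ultimately have "(\<Sum>k = 0..N + 1. l k * (norm (y k - Pneg (y k))^2 - norm (Pneg (y k))^2))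
      = (\<Sum>z\<in>-Kneg. \<Sum>k = 0..N + 1. l k * (column z P \<bullet> y k)^2)
        - (\<Sum>z\<in>Kneg. \<Sum>k = 0..N + 1. l k * (column z P \<bullet> y k)^2)"
    by (simp add: right_diff_distrib sum_subtractf sum_distrib_left sum.swap[of _ _ "-Kneg"]
        sum.swap[of _ _ Kneg] del: sum.cl_ivl_Suc)
  also have "\<dots> = (\<Sum>z\<in>-Kneg. Lam $ z $ z) - (\<Sum>z\<in>Kneg. Lam $ z $ z)"
    by (simp only: sum_l_column_sq)
  also have "\<dots> \<le> (\<Sum>z\<in>-Kneg. \<bar>Lam $ z $ z\<bar>) + (\<Sum>z\<in>Kneg. \<bar>Lam $ z $ z\<bar>)"
  proof -
    have "(\<Sum>z\<in>-Kneg. Lam $ z $ z) \<le> (\<Sum>z\<in>-Kneg. \<bar>Lam $ z $ z\<bar>)"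
      by (rule sum_mono) simp
    moreover have "(\<Sum>z\<in>Kneg. - Lam $ z $ z) \<le> (\<Sum>z\<in>Kneg. \<bar>Lam $ z $ z\<bar>)"
      by (rule sum_mono) simp
    ultimately show ?thesis by (simp add: sum_negf)
  qed
  also have "\<dots> = (\<Sum>z\<in>UNIV. \<bar>Lam $ z $ z\<bar>)"
    using sum.union_disjoint[of "-Kneg" Kneg "\<lambda>z. \<bar>Lam $ z $ z\<bar>"] by (simp add: Un_commute)
  finally show ?thesis .
qed

lemma barycentric_sum_le:
  fixes f :: "real^'n \<Rightarrow> real"
  assumes der: "\<And>x. (f has_derivative (\<lambda>h. g x \<bullet> h)) (at x)"
    and lip: "\<And>u v. norm (g u - g v) \<le> L * norm (u - v)"
    and "0 \<le> L"
    and mu_nonneg: "\<And>i j. i \<in> Ipos \<Longrightarrow> j \<in> Ineg \<Longrightarrow> 0 \<le> mu N p q l y P ks i j"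
  shows "(\<Sum>k = 0..N + 1. l k * f (y k)) \<le> L / 2 * (\<Sum>z\<in>UNIV. \<bar>Lam $ z $ z\<bar>)"
proof -
  define \<psi> where "\<psi> v = norm (v - Pneg v)^2 - norm (Pneg v)^2" for v
  have "(\<Sum>k = 0..N + 1. l k * f (y k))
      = (\<Sum>i\<in>Ipos. \<Sum>j\<in>Ineg. mu N p q l y P ks i j * (f (y i) - f (y j)))"
    by (rule mu_coupling_sum[symmetric])
  also have "\<dots> \<le> L / 2 * (\<Sum>i\<in>Ipos. \<Sum>j\<in>Ineg. mu N p q l y P ks i j * (\<psi> (y i) - \<psi> (y j)))"
    unfolding \<psi>_def
    by (rule coupling_descent_bound[OF der lip mu_nonneg mu_row_mean mu_col_mean])
  also have "\<dots> = L / 2 * (\<Sum>k = 0..N + 1. l k * \<psi> (y k))"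
    by (simp only: mu_coupling_sum)
  also have "\<dots> \<le> L / 2 * (\<Sum>z\<in>UNIV. \<bar>Lam $ z $ z\<bar>)"
    unfolding \<psi>_def by (rule mult_left_mono[OF sum_l_proj_diff_le]) (simp add: \<open>0 \<le> L\<close>)
  finally show ?thesis .
qed

lemma barycentric_sum_abs_le:
  fixes f :: "real^'n \<Rightarrow> real"
  assumes der: "\<And>x. (f has_derivative (\<lambda>h. g x \<bullet> h)) (at x)"
    and lip: "\<And>u v. norm (g u - g v) \<le> L * norm (u - v)"
    and "0 \<le> L"
    and mu_nonneg: "\<And>i j. i \<in> Ipos \<Longrightarrow> j \<in> Ineg \<Longrightarrow> 0 \<le> mu N p q l y P ks i j"
  shows "\<bar>\<Sum>k = 0..N + 1. l k * f (y k)\<bar> \<le> L / 2 * (\<Sum>z\<in>UNIV. \<bar>Lam $ z $ z\<bar>)"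
proof -
  have der_neg: "((\<lambda>x. - f x) has_derivative (\<lambda>h. - g x \<bullet> h)) (at x)" for x
    using has_derivative_minus[OF der[of x]] by simp
  have lip_neg: "norm (- g u - - g v) \<le> L * norm (u - v)" for u v
    using lip[of u v] by (simp add: norm_minus_commute)
  have "- (\<Sum>k = 0..N + 1. l k * f (y k)) \<le> L / 2 * (\<Sum>z\<in>UNIV. \<bar>Lam $ z $ z\<bar>)"
    using barycentric_sum_le[OF der_neg lip_neg \<open>0 \<le> L\<close> mu_nonneg]
    by (simp add: sum_negf del: sum.cl_ivl_Suc)
  then show ?thesis
    using barycentric_sum_le[OF der lip \<open>0 \<le> L\<close> mu_nonneg] by (simp only: abs_le_iff)
qed

lemma frob_inner_G_sign:
  "frob_inner G (L *\<^sub>R (P ** mat_sign Lam ** transpose P)) = L * (\<Sum>z\<in>UNIV. \<bar>Lam $ z $ z\<bar>)"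
proof -
  have "frob_inner G (L *\<^sub>R (P ** mat_sign Lam ** transpose P))
      = L * frob_inner G (P ** mat_sign Lam ** transpose P)"
    by (simp add: frob_inner_def sum_distrib_left algebra_simps)
  also have "frob_inner G (P ** mat_sign Lam ** transpose P)
      = (\<Sum>z\<in>UNIV. sgn (Lam $ z $ z) * Lam $ z $ z)"
    by (simp add: frob_inner_diagonal_conj mat_sign_def Lam_offdiag G_column)
  also have "\<dots> = (\<Sum>z\<in>UNIV. \<bar>Lam $ z $ z\<bar>)"
    by (intro sum.cong refl) (simp add: sgn_if)
  finally show ?thesis .
qed

end

theorem theorem4p5:
  fixes f :: "real^'n \<Rightarrow> real" and L :: real
    and y :: "nat \<Rightarrow> real^'n" and m :: "real^'n \<Rightarrow> real"
    and l :: "nat \<Rightarrow> real" and P Lam :: "real^'n^'n" and ks :: "'n list"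
    and N p q :: nat
  defines "N \<equiv> CARD('n)"
  defines "p \<equiv> card {i \<in> {0..N + 1}. l i > 0}"
  defines "q \<equiv> card {i \<in> {0..N + 1}. l i < 0} - 1"
  assumes Lpos: "L > 0"
    and fC11: "C11 L f"
    and inj: "inj_on y {1..N + 1}"
    and aff_indep: "\<not> affine_dependent (y ` {1..N + 1})"
    and m_affine: "\<exists>a b. \<forall>x. m x = a \<bullet> x + b"
    and m_interp: "\<forall>i\<in>{1..N + 1}. m (y i) = f (y i)"
    and bary_sum: "(\<Sum>i = 1..N + 1. l i) = 1"
    and bary_pt: "(\<Sum>i = 1..N + 1. l i *\<^sub>R y i) = y 0"
    and l0: "l 0 = -1"
    and ordered: "\<forall>i j. 1 \<le> i \<and> i \<le> j \<and> j \<le> N + 1 \<longrightarrow> l j \<le> l i"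
    and P_orth: "orthogonal_matrix P"
    and Lam_diag: "\<forall>a b. a \<noteq> b \<longrightarrow> Lam $ a $ b = 0"
    and G_eig: "(\<Sum>i = 0..N + 1. l i *\<^sub>R outer (y i) (y i)) = P ** Lam ** transpose P"
    and ks_distinct: "distinct ks"
    and ks_set: "set ks = {k. Lam $ k $ k < 0}"
    and mu_nonneg: "\<forall>i\<in>{i \<in> {0..N + 1}. l i > 0}. \<forall>j\<in>{j \<in> {0..N + 1}. l j < 0}.
                      mu N p q l y P ks i j \<ge> 0"
  shows "\<bar>m (y 0) - f (y 0)\<bar> \<le> 1/2 * frob_inner (\<Sum>i = 0..N + 1. l i *\<^sub>R outer (y i) (y i))
                                     (L *\<^sub>R (P ** mat_sign Lam ** transpose P))"
proof -
  interpret barycentric_setting y l P Lam ks N q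
    by unfold_locales (use N_def q_def inj aff_indep bary_sum bary_pt l0 ordered P_orth Lam_diag
        G_eig ks_distinct ks_set in auto)
  obtain g where der: "\<And>x. (f has_derivative (\<lambda>h. g x \<bullet> h)) (at x)"
    and lip: "\<And>u v. norm (g u - g v) \<le> L * norm (u - v)"
    using fC11 unfolding C11_def by blast
  have coupling_nonneg: "0 \<le> mu N p q l y P ks i j" if "i \<in> Ipos" "j \<in> Ineg" for i j
    using mu_nonneg that by (simp add: Ipos_def Ineg_def)
  obtain a b where "\<forall>x. m x = a \<bullet> x + b" using m_affine by blast
  then have "m (y 0) = (\<Sum>k = 1..N + 1. l k * m (y k))"
    using bary_sum bary_pt by (rule affine_barycentric)
  then have "m (y 0) - f (y 0) = (\<Sum>k = 0..N + 1. l k * f (y k))"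
    using m_interp l0 by (simp add: sum.atLeast_Suc_atMost[of 0] del: sum.cl_ivl_Suc)
  moreover have "\<bar>\<Sum>k = 0..N + 1. l k * f (y k)\<bar> \<le> L / 2 * (\<Sum>z\<in>UNIV. \<bar>Lam $ z $ z\<bar>)"
    using Lpos by (intro barycentric_sum_abs_le[OF der lip _ coupling_nonneg]) simp
  ultimately show ?thesis
    unfolding G_def[symmetric] frob_inner_G_sign by simp
qed

end
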